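(* Let $(\mathfrak{g},[\cdot,\cdot]_{\mathfrak{g}})$ be a Leibniz algebra over a field $\mathbf{K}$, $(V;\rho^L,\rho^R)$ a representation, $T:V\to\mathfrak{g}$ a relative Rota-Baxter operator, and $T_t=\sum_{i=0}^n\mathfrak{T}_it^i$ an order $n$ deformation of $T$. Then $T_t$ is extendable if and only if the obstruction class $[\mathrm{Ob}_T]\in\mathcal{H}^2(V,\mathfrak{g})$ is trivial, where $\mathrm{Ob}_T(u,v)=\sum_{i+j=n+1,\ i,j\ge1}\big([\mathfrak{T}_iu,\mathfrak{T}_jv]_{\mathfrak{g}}-\mathfrak{T}_i(\rho^L(\mathfrak{T}_ju)v+\rho^R(\mathfrak{T}_jv)u)\big)$ for $u,v\in V$.
   Context: A Leibniz algebra is a vector space $\mathfrak{g}$ with bilinear $[\cdot,\cdot]_{\mathfrak{g}}$ satisfying $[x,[y,z]_{\mathfrak{g}}]_{\mathfrak{g}}=[[x,y]_{\mathfrak{g}},z]_{\mathfrak{g}}+[y,[x,z]_{\mathfrak{g}}]_{\mathfrak{g}}$. A representation $(V;\rho^L,\rho^R)$: linear $\rho^L,\rho^R:\mathfrak{g}\to\mathfrak{gl}(V)$ with $\rho^L([x,y]_{\mathfrak{g}})=[\rho^L(x),\rho^L(y)]$, $\rho^R([x,y]_{\mathfrak{g}})=[\rho^L(x),\rho^R(y)]$, $\rho^R(y)\rho^L(x)=-\rho^R(y)\rho^R(x)$. A relative Rota-Baxter operator is a linear $T:V\to\mathfrak{g}$ with $[Tv_1,Tv_2]_{\mathfrak{g}}=T(\rho^L(Tv_1)v_2+\rho^R(Tv_2)v_1)$.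 Cohomology of $T$: $C^n(V,\mathfrak{g})=\mathrm{Hom}(\otimes^nV,\mathfrak{g})$, $C^0=\mathfrak{g}$, $\partial_T:C^n\to C^{n+1}$, $(\partial_Tf)(v_1,\dots,v_{n+1})=\sum_{i=1}^n(-1)^{i+1}[Tv_i,f(v_1,\dots,\hat v_i,\dots,v_{n+1})]_{\mathfrak{g}}-\sum_{i=1}^n(-1)^{i+1}T\rho^R(f(v_1,\dots,\hat v_i,\dots,v_{n+1}))v_i+(-1)^{n+1}[f(v_1,\dots,v_n),Tv_{n+1}]_{\mathfrak{g}}+(-1)^nT\rho^L(f(v_1,\dots,v_n))v_{n+1}+\sum_{1\le i<j\le n+1}(-1)^if(v_1,\dots,\hat v_i,\dots,v_{j-1},\rho^L(Tv_i)v_j+\rho^R(Tv_j)v_i,v_{j+1},\dots,v_{n+1})$; $\mathcal{Z}^k=\ker\partial_T\cap C^k$, $\mathcal{B}^k=\partial_T(C^{k-1})$, $\mathcal{H}^k=\mathcal{Z}^k/\mathcal{B}^k$. (The 2-cochain $\mathrm{Ob}_T$ is a 2-cocycle, so $[\mathrm{Ob}_T]$ is defined.) An order $n$ deformation of $T$ is $T_t=\sum_{i=0}^n\mathfrak{T}_it^i$ with $\mathfrak{T}_0=T$, $\mathfrak{T}_i\in\mathrm{Hom}(V,\mathfrak{g})$, viewed as a $\mathbf{K}[t]/(t^{n+1})$-module map $V[t]/(t^{n+1})\to\mathfrak{g}[t]/(t^{n+1})$ (bracket and $\rho^L,\rho^R$ extended $\mathbf{K}[t]/(t^{n+1})$-bilinearly),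 such that $[T_t(u),T_t(v)]_{\mathfrak{g}}=T_t(\rho^L(T_t(u))v+\rho^R(T_t(v))u)$ for all $u,v\in V$. It is extendable if there is $\mathfrak{T}_{n+1}\in\mathrm{Hom}(V,\mathfrak{g})$ with $T_t+\mathfrak{T}_{n+1}t^{n+1}$ an order $n+1$ deformation of $T$. *)

theory Defs
  imports Main "HOL.Vector_Spaces"
begin

text \<open>Vector spaces over a field 'k are given by scalar multiplications
  smg (on the Leibniz algebra 'g) and smv (on the representation space 'v);
  linearity is the library notion Vector_Spaces.linear.\<close>

definition bilinear_map ::
  "('k::field \<Rightarrow> 'a::ab_group_add \<Rightarrow> 'a) \<Rightarrow> ('k \<Rightarrow> 'b::ab_group_add \<Rightarrow> 'b)
   \<Rightarrow> ('k \<Rightarrow> 'c::ab_group_add \<Rightarrow> 'c) \<Rightarrow> ('a \<Rightarrow> 'b \<Rightarrow> 'c) \<Rightarrow> bool" where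
  "bilinear_map sa sb sc B \<longleftrightarrow>
     (\<forall>x. Vector_Spaces.linear sb sc (\<lambda>y. B x y)) \<and>
     (\<forall>y. Vector_Spaces.linear sa sc (\<lambda>x. B x y))"

definition leibniz_algebra ::
  "('k::field \<Rightarrow> 'g::ab_group_add \<Rightarrow> 'g) \<Rightarrow> ('g \<Rightarrow> 'g \<Rightarrow> 'g) \<Rightarrow> bool" where
  "leibniz_algebra smg br \<longleftrightarrow>
     bilinear_map smg smg smg br \<and>
     (\<forall>x y z. br x (br y z) = br (br x y) z + br y (br x z))"

definition leibniz_rep ::
  "('k::field \<Rightarrow> 'g::ab_group_add \<Rightarrow> 'g) \<Rightarrow> ('k \<Rightarrow> 'v::ab_group_add \<Rightarrow> 'v) \<Rightarrow>
   ('g \<Rightarrow> 'g \<Rightarrow> 'g) \<Rightarrow> ('g \<Rightarrow> 'v \<Rightarrow> 'v) \<Rightarrow> ('g \<Rightarrow> 'v \<Rightarrow> 'v) \<Rightarrow> bool" where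
  "leibniz_rep smg smv br rhoL rhoR \<longleftrightarrow>
     bilinear_map smg smv smv rhoL \<and> bilinear_map smg smv smv rhoR \<and>
     (\<forall>x y v. rhoL (br x y) v = rhoL x (rhoL y v) - rhoL y (rhoL x v)) \<and>
     (\<forall>x y v. rhoR (br x y) v = rhoL x (rhoR y v) - rhoR y (rhoL x v)) \<and>
     (\<forall>x y v. rhoR y (rhoL x v) = - rhoR y (rhoR x v))"

definition relative_RB ::
  "('k::field \<Rightarrow> 'g::ab_group_add \<Rightarrow> 'g) \<Rightarrow> ('k \<Rightarrow> 'v::ab_group_add \<Rightarrow> 'v) \<Rightarrow>
   ('g \<Rightarrow> 'g \<Rightarrow> 'g) \<Rightarrow> ('g \<Rightarrow> 'v \<Rightarrow> 'v) \<Rightarrow> ('g \<Rightarrow> 'v \<Rightarrow> 'v) \<Rightarrow> ('v \<Rightarrow> 'g) \<Rightarrow> bool" where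
  "relative_RB smg smv br rhoL rhoR T \<longleftrightarrow>
     Vector_Spaces.linear smv smg T \<and>
     (\<forall>v1 v2. br (T v1) (T v2) = T (rhoL (T v1) v2 + rhoR (T v2) v1))"

text \<open>Order n deformation T_t = sum_{i<=n} Tc i t^i, with the defining identity
  in K[t]/(t^(n+1)) written out coefficientwise: for each k <= n, the
  coefficient of t^k on both sides agrees.\<close>
definition order_deformation ::
  "('k::field \<Rightarrow> 'g::ab_group_add \<Rightarrow> 'g) \<Rightarrow> ('k \<Rightarrow> 'v::ab_group_add \<Rightarrow> 'v) \<Rightarrow>
   ('g \<Rightarrow> 'g \<Rightarrow> 'g) \<Rightarrow> ('g \<Rightarrow> 'v \<Rightarrow> 'v) \<Rightarrow> ('g \<Rightarrow> 'v \<Rightarrow> 'v) \<Rightarrow> ('v \<Rightarrow> 'g) \<Rightarrow>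
   nat \<Rightarrow> (nat \<Rightarrow> 'v \<Rightarrow> 'g) \<Rightarrow> bool" where
  "order_deformation smg smv br rhoL rhoR T n Tc \<longleftrightarrow>
     Tc 0 = T \<and> (\<forall>i\<le>n. Vector_Spaces.linear smv smg (Tc i)) \<and>
     (\<forall>k\<le>n. \<forall>u v.
        (\<Sum>i\<le>k. br (Tc i u) (Tc (k - i) v)) =
        (\<Sum>i\<le>k. Tc i (rhoL (Tc (k - i) u) v + rhoR (Tc (k - i) v) u)))"

definition extendable ::
  "('k::field \<Rightarrow> 'g::ab_group_add \<Rightarrow> 'g) \<Rightarrow> ('k \<Rightarrow> 'v::ab_group_add \<Rightarrow> 'v) \<Rightarrow>
   ('g \<Rightarrow> 'g \<Rightarrow> 'g) \<Rightarrow> ('g \<Rightarrow> 'v \<Rightarrow> 'v) \<Rightarrow> ('g \<Rightarrow> 'v \<Rightarrow> 'v) \<Rightarrow> ('v \<Rightarrow> 'g) \<Rightarrow>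
   nat \<Rightarrow> (nat \<Rightarrow> 'v \<Rightarrow> 'g) \<Rightarrow> bool" where
  "extendable smg smv br rhoL rhoR T n Tc \<longleftrightarrow>
     (\<exists>T'. Vector_Spaces.linear smv smg T' \<and>
        order_deformation smg smv br rhoL rhoR T (Suc n) (Tc(Suc n := T')))"

text \<open>Cochains: an n-cochain is a function on lists (of length n) of vectors
  that is Vector_Spaces.linear in each of the n slots (i.e. an element of Hom(V^{\<otimes>n}, g)).\<close>
definition cochain ::
  "('k::field \<Rightarrow> 'v::ab_group_add \<Rightarrow> 'v) \<Rightarrow> ('k \<Rightarrow> 'g::ab_group_add \<Rightarrow> 'g) \<Rightarrow>
   nat \<Rightarrow> ('v list \<Rightarrow> 'g) \<Rightarrow> bool" where
  "cochain smv smg n f \<longleftrightarrow>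
     (\<forall>i<n. \<forall>xs. length xs = n \<longrightarrow> Vector_Spaces.linear smv smg (\<lambda>v. f (xs[i := v])))"

definition del_at :: "nat \<Rightarrow> 'a list \<Rightarrow> 'a list" where
  "del_at i xs = take i xs @ drop (Suc i) xs"

definition sgn_pow :: "nat \<Rightarrow> 'a::ab_group_add \<Rightarrow> 'a" where
  "sgn_pow k x = (if even k then x else - x)"

text \<open>The coboundary d_T : C^n \<rightarrow> C^(n+1), on lists vs = [v_1,...,v_(n+1)],
  using 0-based indices (paper index i corresponds to position i-1).\<close>
definition coboundary ::
  "('g::ab_group_add \<Rightarrow> 'g \<Rightarrow> 'g) \<Rightarrow> ('g \<Rightarrow> 'v \<Rightarrow> 'v) \<Rightarrow> ('g \<Rightarrow> 'v::ab_group_add \<Rightarrow> 'v) \<Rightarrow>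
   ('v \<Rightarrow> 'g) \<Rightarrow> nat \<Rightarrow> ('v list \<Rightarrow> 'g) \<Rightarrow> 'v list \<Rightarrow> 'g" where
  "coboundary br rhoL rhoR T n f vs =
     (\<Sum>p<n. sgn_pow p (br (T (vs ! p)) (f (del_at p vs))))
   - (\<Sum>p<n. sgn_pow p (T (rhoR (f (del_at p vs)) (vs ! p))))
   + sgn_pow (Suc n) (br (f (take n vs)) (T (vs ! n)))
   + sgn_pow n (T (rhoL (f (take n vs)) (vs ! n)))
   + (\<Sum>q\<le>n. \<Sum>p<q. sgn_pow (Suc p)
        (f (del_at p (vs[q := rhoL (T (vs ! p)) (vs ! q) + rhoR (T (vs ! q)) (vs ! p)]))))"

definition is_coboundary ::
  "('k::field \<Rightarrow> 'g::ab_group_add \<Rightarrow> 'g) \<Rightarrow> ('k \<Rightarrow> 'v::ab_group_add \<Rightarrow> 'v) \<Rightarrow>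
   ('g \<Rightarrow> 'g \<Rightarrow> 'g) \<Rightarrow> ('g \<Rightarrow> 'v \<Rightarrow> 'v) \<Rightarrow> ('g \<Rightarrow> 'v \<Rightarrow> 'v) \<Rightarrow> ('v \<Rightarrow> 'g) \<Rightarrow>
   nat \<Rightarrow> ('v list \<Rightarrow> 'g) \<Rightarrow> bool" where
  "is_coboundary smg smv br rhoL rhoR T k c \<longleftrightarrow>
     (\<exists>f. cochain smv smg (k - 1) f \<and>
        (\<forall>vs. length vs = k \<longrightarrow> c vs = coboundary br rhoL rhoR T (k - 1) f vs))"

definition obstruction ::
  "('g::ab_group_add \<Rightarrow> 'g \<Rightarrow> 'g) \<Rightarrow> ('g \<Rightarrow> 'v \<Rightarrow> 'v) \<Rightarrow> ('g \<Rightarrow> 'v::ab_group_add \<Rightarrow> 'v) \<Rightarrow>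
   nat \<Rightarrow> (nat \<Rightarrow> 'v \<Rightarrow> 'g) \<Rightarrow> 'v list \<Rightarrow> 'g" where
  "obstruction br rhoL rhoR n Tc vs =
     (let u = vs ! 0; v = vs ! 1 in
      \<Sum>i\<in>{1..n}. br (Tc i u) (Tc (Suc n - i) v)
               - Tc i (rhoL (Tc (Suc n - i) u) v + rhoR (Tc (Suc n - i) v) u))"

end

theory Submission
  imports Defs
begin

text \<open>Comparing the coefficients of \<open>t\<^sup>n\<^sup>+\<^sup>1\<close> in the Rota-Baxter identity for
  \<open>T\<^sub>t + \<T>\<^sub>n\<^sub>+\<^sub>1 t\<^sup>n\<^sup>+\<^sup>1\<close>, the terms containing \<open>\<T>\<^sub>n\<^sub>+\<^sub>1\<close> are exactly the coboundary
  \<open>\<partial>\<^sub>T \<T>\<^sub>n\<^sub>+\<^sub>1\<close> of the 1-cochain \<open>\<T>\<^sub>n\<^sub>+\<^sub>1\<close>, and all the remaining terms form \<open>Ob\<^sub>T\<close>;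
  the lower coefficients do not involve \<open>\<T>\<^sub>n\<^sub>+\<^sub>1\<close>. Hence a linear \<open>\<T>\<^sub>n\<^sub>+\<^sub>1\<close> extends
  the deformation iff \<open>Ob\<^sub>T = \<partial>\<^sub>T (-\<T>\<^sub>n\<^sub>+\<^sub>1)\<close>, i.e. iff \<open>Ob\<^sub>T\<close> is a coboundary.
  Only bilinearity of the structure maps and linearity of \<open>T\<close> enter.\<close>

lemma linear_map_compose_neg:
  assumes "Vector_Spaces.linear s1 s2 f"
  shows "Vector_Spaces.linear s1 s2 (\<lambda>x. - f x)"
  using assms module_hom_iff_linear module_pair.module_hom_neg
  by (metis module_hom_def module_pair.intro)

lemma linear_map_neg:
  assumes "Vector_Spaces.linear s1 s2 f"
  shows "f (- x) = - f x"
  using assms module_hom.neg module_hom_iff_linear by blast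

lemma linear_map_add:
  assumes "Vector_Spaces.linear s1 s2 f"
  shows "f (x + y) = f x + f y"
  using assms module_hom.add module_hom_iff_linear by blast

lemma linear_map_diff:
  assumes "Vector_Spaces.linear s1 s2 f"
  shows "f (x - y) = f x - f y"
  using assms module_hom.diff module_hom_iff_linear by blast

definition coboundary1 ::
  "('g::ab_group_add \<Rightarrow> 'g \<Rightarrow> 'g) \<Rightarrow> ('g \<Rightarrow> 'v \<Rightarrow> 'v) \<Rightarrow> ('g \<Rightarrow> 'v::ab_group_add \<Rightarrow> 'v) \<Rightarrow>
   ('v \<Rightarrow> 'g) \<Rightarrow> ('v \<Rightarrow> 'g) \<Rightarrow> 'v \<Rightarrow> 'v \<Rightarrow> 'g" where
  "coboundary1 br rhoL rhoR T F u v =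
     br (T u) (F v) + br (F u) (T v) - T (rhoL (F u) v + rhoR (F v) u)
     - F (rhoL (T u) v + rhoR (T v) u)"

lemma coboundary_one:
  assumes "\<And>x y. T (x + y) = T x + T y"
  shows "coboundary br rhoL rhoR T 1 f [u, v] = coboundary1 br rhoL rhoR T (\<lambda>v. f [v]) u v"
  by (simp add: coboundary_def coboundary1_def sgn_pow_def del_at_def assms)

lemma coboundary1_uminus:
  assumes "bilinear_map smg smg smg br"
    and "bilinear_map smg smv smv rhoL" and "bilinear_map smg smv smv rhoR"
    and "Vector_Spaces.linear smv smg T"
  shows "coboundary1 br rhoL rhoR T (\<lambda>v. - F v) u v = - coboundary1 br rhoL rhoR T F u v"
proof -
  have "br x (- y) = - br x y" "br (- x) y = - br x y" for x y
    using assms(1) by (auto simp: bilinear_map_def intro: linear_map_neg)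
  moreover have "rhoL (- x) w = - rhoL x w" "rhoR (- x) w = - rhoR x w" for x w
    using assms(2,3) by (auto simp: bilinear_map_def intro: linear_map_neg)
  moreover have "T (- w) = - T w" "T (w + w') = T w + T w'" "T (w - w') = T w - T w'" for w w'
    using assms(4) by (auto intro: linear_map_neg linear_map_diff linear_map_add)
  ultimately show ?thesis
    by (simp add: coboundary1_def algebra_simps)
qed

lemma ex_linear_add_coboundary1_eq_0_iff:
  assumes "bilinear_map smg smg smg br"
    and "bilinear_map smg smv smv rhoL" and "bilinear_map smg smv smv rhoR"
    and "Vector_Spaces.linear smv smg T"
  shows "(\<exists>T'. Vector_Spaces.linear smv smg T' \<and> (\<forall>u v. c u v + coboundary1 br rhoL rhoR T T' u v = 0))
    \<longleftrightarrow> (\<exists>F. Vector_Spaces.linear smv smg F \<and> (\<forall>u v. c u v = coboundary1 br rhoL rhoR T F u v))"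
proof -
  note neg = coboundary1_uminus[OF assms]
  show ?thesis
  proof
    assume "\<exists>T'. Vector_Spaces.linear smv smg T' \<and> (\<forall>u v. c u v + coboundary1 br rhoL rhoR T T' u v = 0)"
    then obtain T' where "Vector_Spaces.linear smv smg T'"
      and "\<forall>u v. c u v + coboundary1 br rhoL rhoR T T' u v = 0" by blast
    then show "\<exists>F. Vector_Spaces.linear smv smg F \<and> (\<forall>u v. c u v = coboundary1 br rhoL rhoR T F u v)"
      by (intro exI[of _ "\<lambda>v. - T' v"]) (simp add: linear_map_compose_neg neg eq_neg_iff_add_eq_0)
  next
    assume "\<exists>F. Vector_Spaces.linear smv smg F \<and> (\<forall>u v. c u v = coboundary1 br rhoL rhoR T F u v)"
    then obtain F where "Vector_Spaces.linear smv smg F"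
      and "\<forall>u v. c u v = coboundary1 br rhoL rhoR T F u v" by blast
    then show "\<exists>T'. Vector_Spaces.linear smv smg T' \<and> (\<forall>u v. c u v + coboundary1 br rhoL rhoR T T' u v = 0)"
      by (intro exI[of _ "\<lambda>v. - F v"]) (simp add: linear_map_compose_neg neg)
  qed
qed

lemma cochain_one_iff:
  "cochain smv smg 1 f \<longleftrightarrow> Vector_Spaces.linear smv smg (\<lambda>v. f [v])"
  by (auto simp: cochain_def length_Suc_conv)

lemma is_coboundary_two_iff:
  assumes "Vector_Spaces.linear smv smg T"
  shows "is_coboundary smg smv br rhoL rhoR T 2 c \<longleftrightarrow>
    (\<exists>F. Vector_Spaces.linear smv smg F \<and> (\<forall>u v. c [u, v] = coboundary1 br rhoL rhoR T F u v))"
proof -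
  have T_add: "T (x + y) = T x + T y" for x y
    using assms by (rule linear_map_add)
  have pairs: "(\<forall>vs. length vs = 2 \<longrightarrow> P vs) \<longleftrightarrow> (\<forall>u v. P [u, v])" for P :: "'v list \<Rightarrow> bool"
    by (auto simp: length_Suc_conv numeral_2_eq_2)
  have "is_coboundary smg smv br rhoL rhoR T 2 c \<longleftrightarrow>
    (\<exists>f. cochain smv smg 1 f \<and> (\<forall>u v. c [u, v] = coboundary br rhoL rhoR T 1 f [u, v]))"
    by (simp add: is_coboundary_def pairs)
  also have "\<dots> \<longleftrightarrow>
    (\<exists>F. Vector_Spaces.linear smv smg F \<and> (\<forall>u v. c [u, v] = coboundary1 br rhoL rhoR T F u v))"
  proof
    assume "\<exists>f. cochain smv smg 1 f \<and> (\<forall>u v. c [u, v] = coboundary br rhoL rhoR T 1 f [u, v])"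
    then show "\<exists>F. Vector_Spaces.linear smv smg F \<and> (\<forall>u v. c [u, v] = coboundary1 br rhoL rhoR T F u v)"
      unfolding cochain_one_iff coboundary_one[OF T_add] by blast
  next
    assume "\<exists>F. Vector_Spaces.linear smv smg F \<and> (\<forall>u v. c [u, v] = coboundary1 br rhoL rhoR T F u v)"
    then obtain F where "Vector_Spaces.linear smv smg F"
      and "\<forall>u v. c [u, v] = coboundary1 br rhoL rhoR T F u v" by blast
    then show "\<exists>f. cochain smv smg 1 f \<and> (\<forall>u v. c [u, v] = coboundary br rhoL rhoR T 1 f [u, v])"
      unfolding cochain_one_iff coboundary_one[OF T_add]
      by (intro exI[of _ "\<lambda>xs. F (hd xs)"]) simp
  qed
  finally show ?thesis .
qed

lemma sum_atMost_Suc_ends: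
  "(\<Sum>i\<le>Suc n. g i) = g 0 + (\<Sum>i\<in>{1..n}. g i) + (g (Suc n) :: 'a::comm_monoid_add)"
  by (simp add: atMost_atLeast0 sum.atLeast_Suc_atMost)

lemma deformation_top_coefficient:
  fixes Tc :: "nat \<Rightarrow> 'v::ab_group_add \<Rightarrow> 'g::ab_group_add" and n :: nat and T' :: "'v \<Rightarrow> 'g"
  defines "Tc' \<equiv> Tc(Suc n := T')"
  shows "(\<Sum>i\<le>Suc n. br (Tc' i u) (Tc' (Suc n - i) v))
       - (\<Sum>i\<le>Suc n. Tc' i (rhoL (Tc' (Suc n - i) u) v + rhoR (Tc' (Suc n - i) v) u))
       = obstruction br rhoL rhoR n Tc [u, v] + coboundary1 br rhoL rhoR (Tc 0) T' u v"
proof -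
  have "(\<Sum>i\<in>{1..n}. br (Tc' i u) (Tc' (Suc n - i) v)) = (\<Sum>i\<in>{1..n}. br (Tc i u) (Tc (Suc n - i) v))"
    "(\<Sum>i\<in>{1..n}. Tc' i (rhoL (Tc' (Suc n - i) u) v + rhoR (Tc' (Suc n - i) v) u))
       = (\<Sum>i\<in>{1..n}. Tc i (rhoL (Tc (Suc n - i) u) v + rhoR (Tc (Suc n - i) v) u))"
    by (auto simp: Tc'_def intro!: sum.cong)
  then show ?thesis
    unfolding sum_atMost_Suc_ends
    by (simp add: obstruction_def sum_subtractf coboundary1_def Tc'_def
        algebra_simps)
qed

lemma order_deformation_cong:
  assumes "\<And>i. i \<le> n \<Longrightarrow> S i = S' i"
  shows "order_deformation smg smv br rhoL rhoR T n S \<longleftrightarrow> order_deformation smg smv br rhoL rhoR T n S'"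
proof -
  have "(\<Sum>i\<le>k. f (S i) (S (k - i))) = (\<Sum>i\<le>k. f (S' i) (S' (k - i)))" if "k \<le> n" for k
    using that assms by (intro sum.cong) auto
  then show ?thesis
    using assms[of 0] assms unfolding order_deformation_def by auto
qed

lemma order_deformation_Suc:
  "order_deformation smg smv br rhoL rhoR T (Suc n) S \<longleftrightarrow>
    order_deformation smg smv br rhoL rhoR T n S \<and> Vector_Spaces.linear smv smg (S (Suc n)) \<and>
    (\<forall>u v. (\<Sum>i\<le>Suc n. br (S i u) (S (Suc n - i) v)) =
      (\<Sum>i\<le>Suc n. S i (rhoL (S (Suc n - i) u) v + rhoR (S (Suc n - i) v) u)))"
  unfolding order_deformation_def by (auto simp: le_Suc_eq)

lemma order_deformation_Suc_iff:
  assumes "order_deformation smg smv br rhoL rhoR T n Tc"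
    and "Vector_Spaces.linear smv smg T'"
  shows "order_deformation smg smv br rhoL rhoR T (Suc n) (Tc(Suc n := T')) \<longleftrightarrow>
    (\<forall>u v. obstruction br rhoL rhoR n Tc [u, v] + coboundary1 br rhoL rhoR T T' u v = 0)"
proof -
  have "order_deformation smg smv br rhoL rhoR T n (Tc(Suc n := T'))"
    using assms(1) by (subst order_deformation_cong[of n _ Tc]) auto
  moreover have "Tc 0 = T"
    using assms(1) by (simp add: order_deformation_def)
  ultimately show ?thesis
    using assms(2) unfolding order_deformation_Suc fun_upd_same
    by (simp only: eq_iff_diff_eq_0[of "sum _ _"] deformation_top_coefficient simp_thms)
qed

theorem theorem3p26:
  fixes smg :: "'k::field \<Rightarrow> 'g::ab_group_add \<Rightarrow> 'g"
    and smv :: "'k \<Rightarrow> 'v::ab_group_add \<Rightarrow> 'v"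
    and br :: "'g \<Rightarrow> 'g \<Rightarrow> 'g"
    and rhoL rhoR :: "'g \<Rightarrow> 'v \<Rightarrow> 'v"
    and T :: "'v \<Rightarrow> 'g"
    and n :: nat
    and Tc :: "nat \<Rightarrow> 'v \<Rightarrow> 'g"
  assumes "Vector_Spaces.vector_space smg"
    and "Vector_Spaces.vector_space smv"
    and "leibniz_algebra smg br"
    and "leibniz_rep smg smv br rhoL rhoR"
    and "relative_RB smg smv br rhoL rhoR T"
    and "order_deformation smg smv br rhoL rhoR T n Tc"
  shows "extendable smg smv br rhoL rhoR T n Tc \<longleftrightarrow>
         is_coboundary smg smv br rhoL rhoR T 2 (obstruction br rhoL rhoR n Tc)"
proof -
  let ?Ob = "obstruction br rhoL rhoR n Tc"
  have linT: "Vector_Spaces.linear smv smg T"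
    using assms(5) by (simp add: relative_RB_def)
  have "extendable smg smv br rhoL rhoR T n Tc \<longleftrightarrow>
      (\<exists>T'. Vector_Spaces.linear smv smg T' \<and>
        (\<forall>u v. ?Ob [u, v] + coboundary1 br rhoL rhoR T T' u v = 0))"
    using order_deformation_Suc_iff[OF assms(6)] by (auto simp: extendable_def)
  also have "\<dots> \<longleftrightarrow>
      (\<exists>F. Vector_Spaces.linear smv smg F \<and> (\<forall>u v. ?Ob [u, v] = coboundary1 br rhoL rhoR T F u v))"
    using assms(3,4) linT
    by (intro ex_linear_add_coboundary1_eq_0_iff) (auto simp: leibniz_algebra_def leibniz_rep_def)
  also have "\<dots> \<longleftrightarrow> is_coboundary smg smv br rhoL rhoR T 2 ?Ob"
    using is_coboundary_two_iff[OF linT] by simp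
  finally show ?thesis .
qed

end
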